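(* Assume a capacity is given as in the context, satisfying: whenever $f=0$ $m$-a.e. and $t>0$, $p_tf=0$ except on a set of capacity $0$. Then every $m$-thin set has capacity $0$.
   Context: $(E,\mathcal B(E),m)$ is a $\sigma$-finite measure space. $p_t(x,\cdot)$, $t\ge0$, is a transition probability function on $E$ (probability measures, jointly measurable in $(t,x)$, $p_0(x,A)=1_A(x)$, with the semigroup property $p_{s+t}=p_sp_t$); $p_tf(x)=\int f\,dp_t(x,\cdot)$. $(T_t)$ is a strongly continuous semigroup on $L_2(m)$ with $p_tf$ representing $T_tf$ for bounded measurable square-integrable $f$. $Rf(x)=\int_0^\infty e^{-t}p_tf(x)\,dt$. A set $N\in\mathcal B(E)$ is $m$-thin if there exists $B\in\mathcal B(E)$ with $m(B)=0$ and $N\subset\{x:R1_B(x)>0\}$. A capacity here is a monotone set function on $\mathcal B(E)$ (e.g. that of the potential theory of the associated Markov process) such that a countable union of sets of capacity $0$ has capacity $0$. *)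

theory Defs
  imports "HOL-Analysis.Analysis"
begin

definition L2fun :: "'a measure \<Rightarrow> ('a \<Rightarrow> real) \<Rightarrow> bool" where
  "L2fun M f \<longleftrightarrow> f \<in> borel_measurable M \<and> integrable M (\<lambda>x. (f x)\<^sup>2)"

text \<open>A strongly continuous semigroup of bounded linear operators on L2(M), given
  on representatives (and compatible with a.e. equality, i.e. well defined on classes).\<close>
definition L2_sc_semigroup :: "'a measure \<Rightarrow> (real \<Rightarrow> ('a \<Rightarrow> real) \<Rightarrow> ('a \<Rightarrow> real)) \<Rightarrow> bool" where
  "L2_sc_semigroup M T \<longleftrightarrow>
     (\<forall>t\<ge>0. \<forall>f. L2fun M f \<longrightarrow> L2fun M (T t f)) \<and>
     (\<forall>t\<ge>0. \<forall>f g. L2fun M f \<longrightarrow> L2fun M g \<longrightarrow> (AE x in M. f x = g x)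
         \<longrightarrow> (AE x in M. T t f x = T t g x)) \<and>
     (\<forall>t\<ge>0. \<forall>f g a b. L2fun M f \<longrightarrow> L2fun M g \<longrightarrow>
         (AE x in M. T t (\<lambda>y. a * f y + b * g y) x = a * T t f x + b * T t g x)) \<and>
     (\<forall>t\<ge>0. \<exists>C. \<forall>f. L2fun M f \<longrightarrow>
         (\<integral>x. (T t f x)\<^sup>2 \<partial>M) \<le> C * (\<integral>x. (f x)\<^sup>2 \<partial>M)) \<and>
     (\<forall>f. L2fun M f \<longrightarrow> (AE x in M. T 0 f x = f x)) \<and>
     (\<forall>s\<ge>0. \<forall>t\<ge>0. \<forall>f. L2fun M f \<longrightarrow> (AE x in M. T (s + t) f x = T s (T t f) x)) \<and>
     (\<forall>f. L2fun M f \<longrightarrow> ((\<lambda>t. \<integral>x. (T t f x - f x)\<^sup>2 \<partial>M) \<longlongrightarrow> 0) (at_right 0))"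

definition transition_function :: "'a measure \<Rightarrow> (real \<Rightarrow> 'a \<Rightarrow> 'a measure) \<Rightarrow> bool" where
  "transition_function M p \<longleftrightarrow>
     (\<forall>t\<ge>0. \<forall>x\<in>space M. emeasure (p t x) (space (p t x)) = 1 \<and> sets (p t x) = sets M) \<and>
     (\<forall>A\<in>sets M. (\<lambda>(t, x). measure (p t x) A)
         \<in> borel_measurable (restrict_space lborel {0..} \<Otimes>\<^sub>M M)) \<and>
     (\<forall>x\<in>space M. \<forall>A\<in>sets M. measure (p 0 x) A = indicator A x) \<and>
     (\<forall>s\<ge>0. \<forall>t\<ge>0. \<forall>x\<in>space M. \<forall>A\<in>sets M.
         measure (p (s + t) x) A = (\<integral>y. measure (p t y) A \<partial>(p s x)))"

definition ptf :: "(real \<Rightarrow> 'a \<Rightarrow> 'a measure) \<Rightarrow> real \<Rightarrow> ('a \<Rightarrow> real) \<Rightarrow> 'a \<Rightarrow> real" where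
  "ptf p t f x = (\<integral>y. f y \<partial>(p t x))"

definition resolv :: "(real \<Rightarrow> 'a \<Rightarrow> 'a measure) \<Rightarrow> ('a \<Rightarrow> real) \<Rightarrow> 'a \<Rightarrow> real" where
  "resolv p f x = (LINT t:{0..}|lborel. exp (- t) * ptf p t f x)"

definition m_thin :: "'a measure \<Rightarrow> (real \<Rightarrow> 'a \<Rightarrow> 'a measure) \<Rightarrow> 'a set \<Rightarrow> bool" where
  "m_thin M p N \<longleftrightarrow> N \<in> sets M \<and>
     (\<exists>B\<in>sets M. emeasure M B = 0 \<and> N \<subseteq> {x \<in> space M. resolv p (indicator B) x > 0})"

definition capacity :: "'a measure \<Rightarrow> ('a set \<Rightarrow> ennreal) \<Rightarrow> bool" where
  "capacity M Cap \<longleftrightarrow>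
     (\<forall>A B. A \<in> sets M \<longrightarrow> B \<in> sets M \<longrightarrow> A \<subseteq> B \<longrightarrow> Cap A \<le> Cap B) \<and>
     (\<forall>A :: nat \<Rightarrow> 'a set. (\<forall>n. A n \<in> sets M \<and> Cap (A n) = 0) \<longrightarrow> Cap (\<Union>n. A n) = 0)"

end

(* Let B be an m-null set with N \<subseteq> {R 1_B > 0}. As T_t respects m-a.e. equality, p_t(x, B) = 0
   for m-a.e. x and every t, so by Tonelli the set C = {R 1_B \<noteq> 0} is m-null. The hypothesis on the
   capacity yields, for each n, a capacity-null set off which p_{1/n}(x, C) = 0. For such x the
   Chapman-Kolmogorov equation gives
     \<integral>_0^\<infinity> e^(-s) p_{1/n+s}(x, B) ds = \<integral> R 1_B(y) p_{1/n}(x, dy) = 0,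
   so p_t(x, B) = 0 for a.e. t \<ge> 1/n. Letting n \<rightarrow> \<infinity> gives R 1_B(x) = 0. Hence N is covered by
   countably many sets of capacity 0. *)

theory Submission
  imports Defs "HOL-Probability.Probability_Measure"
begin

lemma AE_lborel_translate:
  fixes c :: "'a::euclidean_space"
  assumes "AE s in lborel. Q (c + s)"
  shows "AE t in lborel. Q t"
proof -
  from assms obtain Z where "{s \<in> space lborel. \<not> Q (c + s)} \<subseteq> Z" "emeasure lborel Z = 0" "Z \<in> sets lborel"
    by (rule AE_E)
  then have Z: "Z \<in> null_sets lborel" "{s. \<not> Q (c + s)} \<subseteq> Z"
    by auto
  show ?thesis
    by (rule AE_I'[OF null_sets_translation[OF Z(1), of c]]) (use Z(2) in force)
qed

lemma bounded_range_indicator: "bounded (range (indicator A :: 'a \<Rightarrow> real))"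
  by (rule finite_imp_bounded, rule finite_subset[of _ "{0, 1}"]) (auto simp: indicator_def)

lemma L2fun_indicator:
  assumes "A \<in> sets M" "emeasure M A \<noteq> \<infinity>"
  shows "L2fun M (indicator A)"
proof -
  have "(\<lambda>x. (indicator A x :: real)\<^sup>2) = indicator A"
    by (auto simp: indicator_def)
  with assms show ?thesis
    by (simp add: L2fun_def integrable_real_indicator less_top)
qed

lemma L2_sc_semigroup_AE_cong:
  assumes "L2_sc_semigroup M T" "t \<ge> 0" "L2fun M f" "L2fun M g" "AE x in M. f x = g x"
  shows "AE x in M. T t f x = T t g x"
  using assms by (simp add: L2_sc_semigroup_def)

lemma L2_sc_semigroup_linear:
  assumes "L2_sc_semigroup M T" "t \<ge> 0" "L2fun M f" "L2fun M g"
  shows "AE x in M. T t (\<lambda>y. a * f y + b * g y) x = a * T t f x + b * T t g x"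
  using assms by (simp add: L2_sc_semigroup_def)

lemma L2_sc_semigroup_AE_zero:
  assumes "L2_sc_semigroup M T" "t \<ge> 0" "L2fun M f" "AE x in M. f x = 0"
  shows "AE x in M. T t f x = 0"
proof -
  have L2_zero: "L2fun M (\<lambda>_. 0)"
    by (simp add: L2fun_def)
  have "AE x in M. T t f x = T t (\<lambda>_. 0) x"
    using assms(4) by (rule L2_sc_semigroup_AE_cong[OF assms(1-3) L2_zero])
  moreover have "AE x in M. T t (\<lambda>y. 0 * 0 + 0 * 0) x = 0 * T t (\<lambda>_. 0) x + 0 * T t (\<lambda>_. 0) x"
    by (rule L2_sc_semigroup_linear[OF assms(1,2) L2_zero L2_zero])
  ultimately show ?thesis
    by eventually_elim simp
qed

lemma transition_function_prob_space:
  assumes "transition_function M p" "t \<ge> 0" "x \<in> space M"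
  shows "prob_space (p t x)"
  using assms by (auto simp: transition_function_def intro: prob_spaceI)

lemma sets_transition_function:
  assumes "transition_function M p" "t \<ge> 0" "x \<in> space M"
  shows "sets (p t x) = sets M"
  using assms by (simp add: transition_function_def)

lemma space_transition_function:
  assumes "transition_function M p" "t \<ge> 0" "x \<in> space M"
  shows "space (p t x) = space M"
  using sets_transition_function[OF assms] by (rule sets_eq_imp_space_eq)

lemma ptf_indicator:
  assumes "transition_function M p" "t \<ge> 0" "x \<in> space M" "A \<in> sets M"
  shows "ptf p t (indicator A) x = measure (p t x) A"
  using sets.sets_into_space[OF assms(4)]
  by (simp add: ptf_def space_transition_function[OF assms(1-3)] Int_absorb2)

lemma borel_measurable_transition_function:
  assumes "transition_function M p" "A \<in> sets M" "t \<ge> 0"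
  shows "(\<lambda>x. measure (p t x) A) \<in> borel_measurable M"
proof -
  have "(\<lambda>(t, x). measure (p t x) A) \<in> borel_measurable (restrict_space lborel {0..} \<Otimes>\<^sub>M M)"
    using assms by (simp add: transition_function_def)
  from measurable_comp[OF measurable_Pair1' this] \<open>t \<ge> 0\<close> show ?thesis
    by (simp add: comp_def space_restrict_space)
qed

lemma measurable_transition_function:
  assumes "transition_function M p" "A \<in> sets M"
  shows "(\<lambda>(x, t). measure (p t x) A) \<in> borel_measurable (M \<Otimes>\<^sub>M restrict_space lborel {0..})"
proof -
  have "(\<lambda>(t, x). measure (p t x) A) \<in> borel_measurable (restrict_space lborel {0..} \<Otimes>\<^sub>M M)"
    using assms by (simp add: transition_function_def)
  from measurable_pair_swap[OF this] show ?thesis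
    by simp
qed

lemma nn_integral_transition_function:
  assumes tf: "transition_function M p" and A: "A \<in> sets M"
    and "q \<ge> 0" "s \<ge> 0" "x \<in> space M"
  shows "(\<integral>\<^sup>+y. ennreal (measure (p s y) A) \<partial>p q x) = ennreal (measure (p (q + s) x) A)"
proof -
  interpret prob_space "p q x"
    using tf \<open>q \<ge> 0\<close> \<open>x \<in> space M\<close> by (rule transition_function_prob_space)
  have "(\<lambda>y. measure (p s y) A) \<in> borel_measurable (p q x)"
    using borel_measurable_transition_function[OF tf A \<open>s \<ge> 0\<close>]
    by (simp add: measurable_cong_sets[OF sets_transition_function[OF tf \<open>q \<ge> 0\<close> \<open>x \<in> space M\<close>]])
  moreover have "AE y in p q x. norm (measure (p s y) A) \<le> 1"
    using space_transition_function[OF tf \<open>q \<ge> 0\<close> \<open>x \<in> space M\<close>]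
      prob_space.prob_le_1[OF transition_function_prob_space[OF tf \<open>s \<ge> 0\<close>]]
    by (intro AE_I2) simp
  ultimately have "integrable (p q x) (\<lambda>y. measure (p s y) A)"
    by (rule integrable_const_bound[rotated])
  then have "(\<integral>\<^sup>+y. ennreal (measure (p s y) A) \<partial>p q x) = ennreal (\<integral>y. measure (p s y) A \<partial>p q x)"
    by (rule nn_integral_eq_integral) simp
  with assms show ?thesis
    by (simp add: transition_function_def)
qed

lemma transition_function_null_set:
  assumes tf: "transition_function M p" and sg: "L2_sc_semigroup M T"
    and represents: "\<forall>t\<ge>0. \<forall>f. f \<in> borel_measurable M \<longrightarrow> bounded (range f) \<longrightarrow> L2fun M f \<longrightarrow>
           (AE x in M. ptf p t f x = T t f x)"
    and B: "B \<in> null_sets M" and "t \<ge> 0"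
  shows "AE x in M. measure (p t x) B = 0"
proof -
  have L2: "L2fun M (indicator B)"
    using B by (intro L2fun_indicator) auto
  have "AE x in M. ptf p t (indicator B) x = T t (indicator B) x"
    using represents \<open>t \<ge> 0\<close> L2 bounded_range_indicator borel_measurable_indicator[OF null_setsD2[OF B]]
    by blast
  moreover have "AE x in M. T t (indicator B) x = 0"
    using AE_not_in[OF B]
    by (intro L2_sc_semigroup_AE_zero[OF sg \<open>t \<ge> 0\<close> L2]) (auto elim: AE_mp)
  ultimately show ?thesis
    using AE_space
    by eventually_elim (simp add: ptf_indicator[OF tf \<open>t \<ge> 0\<close> _ null_setsD2[OF B]])
qed

text \<open>The resolvent \<open>R 1\<^sub>A\<close> as a nonnegative integral, so that Tonelli's theorem applies
  without integrability conditions.\<close>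
definition nn_resolv :: "(real \<Rightarrow> 'a \<Rightarrow> 'a measure) \<Rightarrow> 'a set \<Rightarrow> 'a \<Rightarrow> ennreal" where
  "nn_resolv p A x = (\<integral>\<^sup>+t. ennreal (exp (- t) * measure (p t x) A) \<partial>restrict_space lborel {0..})"

lemma sigma_finite_halfline: "sigma_finite_measure (restrict_space lborel {0::real..})"
  by (rule sigma_finite_measure_restrict_space) (auto simp: lborel.sigma_finite_measure_axioms)

lemma borel_measurable_exp_neg_halfline:
  "(\<lambda>t. exp (- t)) \<in> borel_measurable (restrict_space lborel {0::real..})"
  by (intro measurable_restrict_space1) (simp add: measurable_lborel1)

lemma measurable_nn_resolv_integrand:
  assumes "transition_function M p" "A \<in> sets M"
  shows "(\<lambda>(x, t). ennreal (exp (- t) * measure (p t x) A))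
    \<in> borel_measurable (M \<Otimes>\<^sub>M restrict_space lborel {0..})"
proof -
  have "(\<lambda>z. exp (- snd z) * measure (p (snd z) (fst z)) A)
      \<in> borel_measurable (M \<Otimes>\<^sub>M restrict_space lborel {0..})"
    using measurable_transition_function[OF assms]
    by (intro borel_measurable_times measurable_compose[OF measurable_snd borel_measurable_exp_neg_halfline])
       (simp add: case_prod_beta')
  then show ?thesis
    unfolding case_prod_beta' by (rule measurable_compose) simp
qed

lemma borel_measurable_nn_resolv:
  assumes "transition_function M p" "A \<in> sets M"
  shows "nn_resolv p A \<in> borel_measurable M"
  unfolding nn_resolv_def
  using sigma_finite_measure.borel_measurable_nn_integral[OF sigma_finite_halfline
      measurable_nn_resolv_integrand[OF assms]] by simp

lemma nn_resolv_AE_zero: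
  assumes "sigma_finite_measure M" "transition_function M p" "A \<in> sets M"
    and null: "\<And>t. t \<ge> 0 \<Longrightarrow> AE x in M. measure (p t x) A = 0"
  shows "AE x in M. nn_resolv p A x = 0"
proof -
  interpret pair_sigma_finite M "restrict_space lborel {0::real..}"
    using assms(1) sigma_finite_halfline by (simp add: pair_sigma_finite_def)
  have "(\<integral>\<^sup>+x. nn_resolv p A x \<partial>M)
      = (\<integral>\<^sup>+t. \<integral>\<^sup>+x. ennreal (exp (- t) * measure (p t x) A) \<partial>M \<partial>restrict_space lborel {0..})"
    unfolding nn_resolv_def using Fubini'[OF measurable_nn_resolv_integrand[OF assms(2,3)]] by simp
  also have "\<dots> = (\<integral>\<^sup>+t. 0 \<partial>restrict_space lborel {0::real..})"
  proof (intro nn_integral_cong)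
    fix t assume "t \<in> space (restrict_space lborel {0::real..})"
    then have "AE x in M. ennreal (exp (- t) * measure (p t x) A) = 0"
      using null[of t] by (auto simp: space_restrict_space elim: AE_mp)
    from nn_integral_cong_AE[OF this]
    show "(\<integral>\<^sup>+x. ennreal (exp (- t) * measure (p t x) A) \<partial>M) = 0"
      by simp
  qed
  finally show ?thesis
    using nn_integral_0_iff_AE[OF borel_measurable_nn_resolv[OF assms(2,3)]] by simp
qed

lemma nn_integral_shifted_nn_resolv:
  assumes tf: "transition_function M p" and A: "A \<in> sets M" and "q \<ge> 0" "x \<in> space M"
  shows "(\<integral>\<^sup>+s. ennreal (exp (- s) * measure (p (q + s) x) A) \<partial>restrict_space lborel {0..})
    = (\<integral>\<^sup>+y. nn_resolv p A y \<partial>p q x)"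
proof -
  interpret prob_space "p q x"
    using tf \<open>q \<ge> 0\<close> \<open>x \<in> space M\<close> by (rule transition_function_prob_space)
  interpret pair_sigma_finite "p q x" "restrict_space lborel {0::real..}"
    using sigma_finite_measure_axioms sigma_finite_halfline by (simp add: pair_sigma_finite_def)
  have integrand: "(\<lambda>(y, s). ennreal (exp (- s) * measure (p s y) A))
      \<in> borel_measurable (p q x \<Otimes>\<^sub>M restrict_space lborel {0..})"
    using measurable_nn_resolv_integrand[OF tf A]
    by (simp add: measurable_cong_sets[OF sets_pair_measure_cong[OF
          sets_transition_function[OF tf \<open>q \<ge> 0\<close> \<open>x \<in> space M\<close>] refl]])
  have "(\<integral>\<^sup>+s. ennreal (exp (- s) * measure (p (q + s) x) A) \<partial>restrict_space lborel {0..})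
      = (\<integral>\<^sup>+s. \<integral>\<^sup>+y. ennreal (exp (- s) * measure (p s y) A) \<partial>p q x \<partial>restrict_space lborel {0..})"
  proof (intro nn_integral_cong)
    fix s assume "s \<in> space (restrict_space lborel {0::real..})"
    then have "s \<ge> 0"
      by (simp add: space_restrict_space)
    have "(\<lambda>y. measure (p s y) A) \<in> borel_measurable (p q x)"
      using borel_measurable_transition_function[OF tf A \<open>s \<ge> 0\<close>]
      by (simp add: measurable_cong_sets[OF sets_transition_function[OF tf \<open>q \<ge> 0\<close> \<open>x \<in> space M\<close>]])
    with \<open>s \<ge> 0\<close> show "ennreal (exp (- s) * measure (p (q + s) x) A)
        = (\<integral>\<^sup>+y. ennreal (exp (- s) * measure (p s y) A) \<partial>p q x)"
      using nn_integral_transition_function[OF tf A \<open>q \<ge> 0\<close> _ \<open>x \<in> space M\<close>]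
      by (simp add: ennreal_mult nn_integral_cmult)
  qed
  also have "\<dots> = (\<integral>\<^sup>+y. nn_resolv p A y \<partial>p q x)"
    unfolding nn_resolv_def using Fubini'[OF integrand] by simp
  finally show ?thesis .
qed

lemma AE_transition_function_zero_after:
  assumes tf: "transition_function M p" and A: "A \<in> sets M" and "q \<ge> 0" "x \<in> space M"
    and null: "AE y in p q x. nn_resolv p A y = 0"
  shows "AE t in lborel. q \<le> t \<longrightarrow> measure (p t x) A = 0"
proof -
  let ?f = "\<lambda>s. ennreal (exp (- s) * measure (p (q + s) x) A)"
  have shift: "(\<lambda>s. (x, q + s))
      \<in> restrict_space lborel {0..} \<rightarrow>\<^sub>M M \<Otimes>\<^sub>M restrict_space lborel {0::real..}"
    using \<open>q \<ge> 0\<close> \<open>x \<in> space M\<close>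
    by (intro measurable_Pair measurable_const measurable_restrict_space3) (auto simp: Pi_iff)
  have "(\<lambda>s. measure (p (q + s) x) A) \<in> borel_measurable (restrict_space lborel {0..})"
    using measurable_comp[OF shift measurable_transition_function[OF tf A]] by (simp add: comp_def)
  then have "?f \<in> borel_measurable (restrict_space lborel {0..})"
    using borel_measurable_exp_neg_halfline
    by (intro measurable_compose[OF _ measurable_ennreal] borel_measurable_times)
  moreover have "integral\<^sup>N (restrict_space lborel {0..}) ?f = 0"
    using nn_integral_shifted_nn_resolv[OF tf A \<open>q \<ge> 0\<close> \<open>x \<in> space M\<close>]
      nn_integral_cong_AE[OF null] by simp
  ultimately have "AE s in restrict_space lborel {0..}. ?f s = 0"
    by (simp add: nn_integral_0_iff_AE)
  then have "AE s in lborel. 0 \<le> s \<longrightarrow> measure (p (q + s) x) A \<le> 0"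
    by (simp add: AE_restrict_space_iff ennreal_eq_0_iff mult_le_0_iff)
  then have "AE s in lborel. q \<le> q + s \<longrightarrow> measure (p (q + s) x) A = 0"
    by eventually_elim (simp add: measure_le_0_iff)
  then show ?thesis
    by (rule AE_lborel_translate[where Q = "\<lambda>t. q \<le> t \<longrightarrow> measure (p t x) A = 0"])
qed

lemma resolv_indicator_eq_0:
  assumes tf: "transition_function M p" and A: "A \<in> sets M" and "x \<in> space M"
    and null: "AE t in lborel. 0 < t \<longrightarrow> measure (p t x) A = 0"
  shows "resolv p (indicator A) x = 0"
  unfolding resolv_def set_lebesgue_integral_def
proof (rule integral_eq_zero_AE)
  show "AE t in lborel. indicator {0..} t *\<^sub>R (exp (- t) * ptf p t (indicator A) x) = 0"
    using null AE_lborel_singleton[of 0]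
    by eventually_elim (auto simp: indicator_def ptf_indicator[OF tf _ \<open>x \<in> space M\<close> A])
qed

lemma resolv_indicator_eq_0_if_transitions_avoid:
  assumes tf: "transition_function M p" and A: "A \<in> sets M" and x: "x \<in> space M"
    and avoid: "\<And>n::nat. measure (p (1 / Suc n) x) {y \<in> space M. nn_resolv p A y \<noteq> 0} = 0"
  shows "resolv p (indicator A) x = 0"
proof (rule resolv_indicator_eq_0[OF tf A x])
  have "AE t in lborel. 1 / Suc n \<le> t \<longrightarrow> measure (p t x) A = 0" for n
  proof (rule AE_transition_function_zero_after[OF tf A _ x])
    let ?q = "1 / real (Suc n)" and ?S = "{y \<in> space M. nn_resolv p A y \<noteq> 0}"
    interpret prob_space "p ?q x"
      using tf x by (intro transition_function_prob_space) auto
    have "?S \<in> sets (p ?q x)"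
      using borel_measurable_nn_resolv[OF tf A] sets_transition_function[OF tf _ x] by simp
    moreover have "emeasure (p ?q x) ?S = 0"
      using avoid[of n] by (subst emeasure_eq_measure) simp
    ultimately have "?S \<in> null_sets (p ?q x)"
      by (simp add: null_sets_def)
    from AE_not_in[OF this] show "AE y in p ?q x. nn_resolv p A y = 0"
      using space_transition_function[OF tf _ x] by (auto elim: AE_mp)
  qed simp
  then have "AE t in lborel. \<forall>n::nat. 1 / Suc n \<le> t \<longrightarrow> measure (p t x) A = 0"
    by (subst AE_all_countable) blast
  then show "AE t in lborel. 0 < t \<longrightarrow> measure (p t x) A = 0"
  proof eventually_elim
    case (elim t)
    show ?case
    proof
      assume "0 < t"
      then obtain n where "inverse (real (Suc n)) < t"
        using reals_Archimedean by blast
      then show "measure (p t x) A = 0"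
        using elim[rule_format, of n] by (simp add: inverse_eq_divide)
    qed
  qed
qed

lemma capacity_null_if_subset_Union:
  fixes Z :: "nat \<Rightarrow> 'a set"
  assumes "capacity M Cap" "N \<in> sets M" "\<And>n. Z n \<in> sets M" "\<And>n. Cap (Z n) = 0"
    and "N \<subseteq> (\<Union>n. Z n)"
  shows "Cap N = 0"
proof -
  note capacity = assms(1)[unfolded capacity_def]
  have "(\<Union>n. Z n) \<in> sets M"
    using assms(3) by (intro sets.countable_UN) auto
  then have "Cap N \<le> Cap (\<Union>n. Z n)"
    using assms(2,5) by (intro capacity[THEN conjunct1, rule_format])
  also have "\<dots> = 0"
    using assms(3,4) by (intro capacity[THEN conjunct2, rule_format]) auto
  finally show ?thesis
    by simp
qed

theorem lemma2p19:
  fixes M :: "'a measure" and p :: "real \<Rightarrow> 'a \<Rightarrow> 'a measure"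
    and T :: "real \<Rightarrow> ('a \<Rightarrow> real) \<Rightarrow> ('a \<Rightarrow> real)"
    and Cap :: "'a set \<Rightarrow> ennreal"
  assumes "sigma_finite_measure M"
    and "transition_function M p"
    and "L2_sc_semigroup M T"
    and "\<forall>t\<ge>0. \<forall>f. f \<in> borel_measurable M \<longrightarrow> bounded (range f) \<longrightarrow> L2fun M f \<longrightarrow>
           (AE x in M. ptf p t f x = T t f x)"
    and "capacity M Cap"
    and "\<forall>f t. f \<in> borel_measurable M \<longrightarrow> bounded (range f) \<longrightarrow> (AE x in M. f x = 0) \<longrightarrow> t > 0 \<longrightarrow>
           (\<exists>N\<in>sets M. Cap N = 0 \<and> (\<forall>x\<in>space M - N. ptf p t f x = 0))"
    and "m_thin M p N"
  shows "Cap N = 0"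
proof -
  note tf = assms(2)
  from \<open>m_thin M p N\<close> obtain B where N: "N \<in> sets M" and B: "B \<in> null_sets M"
    and N_sub: "N \<subseteq> {x \<in> space M. resolv p (indicator B) x > 0}"
    unfolding m_thin_def null_sets_def by blast
  define C where "C = {x \<in> space M. nn_resolv p B x \<noteq> 0}"
  have C_sets: "C \<in> sets M"
    unfolding C_def using borel_measurable_nn_resolv[OF tf null_setsD2[OF B]] by simp
  have "AE x in M. nn_resolv p B x = 0"
    using transition_function_null_set[OF tf assms(3,4) B]
    by (rule nn_resolv_AE_zero[OF assms(1) tf null_setsD2[OF B]])
  then have "AE x in M. indicator C x = (0::real)"
    by eventually_elim (simp add: C_def)
  then have "\<exists>Z\<in>sets M. Cap Z = 0 \<and> (\<forall>x\<in>space M - Z. ptf p (1 / Suc n) (indicator C) x = 0)" for n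
    using assms(6)[rule_format, OF borel_measurable_indicator[OF C_sets] bounded_range_indicator,
        of "1 / Suc n"] by simp
  then obtain Z where Z: "\<And>n. Z n \<in> sets M" "\<And>n. Cap (Z n) = 0"
    and ptf_C: "\<And>n x. x \<in> space M - Z n \<Longrightarrow> ptf p (1 / Suc n) (indicator C) x = 0"
    by metis
  have "resolv p (indicator B) x = 0" if "x \<in> space M - (\<Union>n. Z n)" for x
    using that ptf_C ptf_indicator[OF tf _ _ C_sets]
    by (intro resolv_indicator_eq_0_if_transitions_avoid[OF tf null_setsD2[OF B]]) (auto simp: C_def)
  with N_sub have "N \<subseteq> (\<Union>n. Z n)"
    by force
  with assms(5) N Z show ?thesis
    by (rule capacity_null_if_subset_Union)
qed

end
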